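(* Let $\varphi$ be any forecasting system and $T$ a computable test supermartingale for $\varphi$. Then there is a recursive, positive, rational-valued test supermartingale $R$ for $\varphi$ such that $|4R(s)-T(s)|\le4\cdot2^{-|s|}$ for all $s\in\mathbb S$.
   Context: $\mathbb S$ is the set of finite binary strings, $\square$ the empty string, $|s|$ length, $sx$ concatenation. $\mathcal I$: nonempty closed subintervals of $[0,1]$; $\overline E_I(f)=\max_{p\in I}[pf(1)+(1-p)f(0)]$ for $f:\{0,1\}\to\mathbb R$. Forecasting system: any $\varphi:\mathbb S\to\mathcal I$. A supermartingale for $\varphi$ is $M:\mathbb S\to\mathbb R$ with $\overline E_{\varphi(s)}(M(s\,\cdot))\le M(s)$ for all $s$ ($M(s\,\cdot):x\mapsto M(sx)$); a test supermartingale is a non-negative one with $M(\square)=1$. A real map $r:\mathbb S\to\mathbb R$ is computable if there is a recursive $q:\mathbb S\times\mathbb N_0\to\mathbb Q$ with $|r(s)-q(s,N)|\le2^{-N}$ for all $s,N$; a rational-valued process is recursive if it is a recursive map $\mathbb S\to\mathbb Q$. *)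

theory Defs
  imports Complex_Main "HOL-Library.Nat_Bijection"
begin

text \<open>Finite binary strings are bool lists (True = 1, False = 0); the concatenation
  s x is s @ [x]; the empty string is []; |s| is length s.\<close>

definition forecasting_system :: "(bool list \<Rightarrow> real set) \<Rightarrow> bool" where
  "forecasting_system \<phi> \<longleftrightarrow> (\<forall>s. \<exists>a b. 0 \<le> a \<and> a \<le> b \<and> b \<le> 1 \<and> \<phi> s = {a..b})"

definition upper_exp :: "real set \<Rightarrow> (bool \<Rightarrow> real) \<Rightarrow> real" where
  "upper_exp I f = (SUP p\<in>I. p * f True + (1 - p) * f False)"

definition supermartingale :: "(bool list \<Rightarrow> real set) \<Rightarrow> (bool list \<Rightarrow> real) \<Rightarrow> bool" where
  "supermartingale \<phi> M \<longleftrightarrow> (\<forall>s. upper_exp (\<phi> s) (\<lambda>x. M (s @ [x])) \<le> M s)"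

definition test_supermartingale :: "(bool list \<Rightarrow> real set) \<Rightarrow> (bool list \<Rightarrow> real) \<Rightarrow> bool" where
  "test_supermartingale \<phi> M \<longleftrightarrow> supermartingale \<phi> M \<and> (\<forall>s. 0 \<le> M s) \<and> M [] = 1"

datatype recf = Zero | Succ | Proj nat | Comp recf "recf list" | PrimRec recf recf | Mu recf

inductive rec_eval :: "recf \<Rightarrow> nat list \<Rightarrow> nat \<Rightarrow> bool" where
  zero: "rec_eval Zero xs 0"
| succ: "rec_eval Succ [x] (Suc x)"
| proj: "i < length xs \<Longrightarrow> rec_eval (Proj i) xs (xs ! i)"
| comp: "\<lbrakk>rec_eval f ys y; length ys = length gs;
          \<forall>i<length gs. rec_eval (gs ! i) xs (ys ! i)\<rbrakk> \<Longrightarrow> rec_eval (Comp f gs) xs y"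
| pr0: "rec_eval f xs y \<Longrightarrow> rec_eval (PrimRec f g) (0 # xs) y"
| prS: "\<lbrakk>rec_eval (PrimRec f g) (n # xs) y; rec_eval g (n # y # xs) z\<rbrakk>
        \<Longrightarrow> rec_eval (PrimRec f g) (Suc n # xs) z"
| mu: "\<lbrakk>rec_eval f (n # xs) 0; \<forall>m<n. \<exists>v. 0 < v \<and> rec_eval f (m # xs) v\<rbrakk>
        \<Longrightarrow> rec_eval (Mu f) xs n"

definition recursive_nat :: "(nat \<Rightarrow> nat) \<Rightarrow> bool" where
  "recursive_nat g \<longleftrightarrow> (\<exists>r. \<forall>n. rec_eval r [n] (g n))"

text \<open>Bijective base-2 coding of binary strings as naturals.\<close>
fun bs_code :: "bool list \<Rightarrow> nat" where
  "bs_code [] = 0"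
| "bs_code (b # bs) = 2 * bs_code bs + (if b then 2 else 1)"

definition rat_decode :: "nat \<Rightarrow> rat" where
  "rat_decode n = of_int (int_decode (fst (prod_decode n))) / of_nat (Suc (snd (prod_decode n)))"

definition recursive_rat_process :: "(bool list \<Rightarrow> rat) \<Rightarrow> bool" where
  "recursive_rat_process R \<longleftrightarrow>
     (\<exists>g. recursive_nat g \<and> (\<forall>s. R s = rat_decode (g (bs_code s))))"

text \<open>r is computable iff there is a recursive q : S x N0 -> Q with |r s - q(s,N)| <= 2^-N.\<close>
definition computable_real_process :: "(bool list \<Rightarrow> real) \<Rightarrow> bool" where
  "computable_real_process r \<longleftrightarrow>
     (\<exists>g. recursive_nat g \<and>
        (\<forall>s N. \<bar>r s - of_rat (rat_decode (g (prod_encode (bs_code s, N))))\<bar> \<le> (1/2) ^ N))"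

end

theory Submission
  imports Defs
begin

text \<open>Approximate T s to within e s = 2^-c(s), where c is the bijective code of s; since c grows
  by at least one from a string to its children, e at least halves, and c(s) \<ge> |s|. The value
  R s = (q s + 3 e s) / 4 then lies between T s / 4 + e s / 2 and T s / 4 + e s, so the slack
  e s / 2 at s absorbs the approximation error e (s x) \<le> e s / 2 of both children and the
  supermartingale inequality of T carries over to R; the same lower bound makes R positive.
  At the root R is 1 by fiat, which the bound |4 R - T| \<le> 4 e tolerates since T [] = 1.\<close>

section \<open>Total recursive functions\<close>

definition recfn :: "nat \<Rightarrow> (nat list \<Rightarrow> nat) \<Rightarrow> bool" where
  "recfn k F \<longleftrightarrow> (\<exists>r. \<forall>xs. length xs = k \<longrightarrow> rec_eval r xs (F xs))"

lemma recfn_cong: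
  "recfn k F \<Longrightarrow> k = k' \<Longrightarrow> (\<And>xs. length xs = k' \<Longrightarrow> F xs = G xs) \<Longrightarrow> recfn k' G"
  unfolding recfn_def by metis

lemma recursive_nat_iff_recfn: "recursive_nat g \<longleftrightarrow> recfn 1 (\<lambda>xs. g (xs ! 0))"
  unfolding recursive_nat_def recfn_def
  by (metis One_nat_def length_Cons list.size(3) nth_Cons_0 length_Suc_conv length_0_conv)

lemma recfn_zero: "recfn k (\<lambda>_. 0)"
  unfolding recfn_def by (auto intro: rec_eval.zero)

lemma recfn_proj: "i < k \<Longrightarrow> recfn k (\<lambda>xs. xs ! i)"
  unfolding recfn_def by (auto intro: rec_eval.proj)

lemma recfn_succ: "recfn 1 (\<lambda>xs. Suc (xs ! 0))"
  unfolding recfn_def by (metis One_nat_def length_Suc_conv length_0_conv nth_Cons_0 rec_eval.succ)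

lemma recfn_comp:
  assumes "recfn (length Gs) F" "\<forall>G\<in>set Gs. recfn k G"
  shows "recfn k (\<lambda>xs. F (map (\<lambda>G. G xs) Gs))"
proof -
  obtain f where f: "\<forall>ys. length ys = length Gs \<longrightarrow> rec_eval f ys (F ys)"
    using assms(1) unfolding recfn_def by auto
  have "\<exists>rs. length rs = length Gs \<and>
      (\<forall>i<length Gs. \<forall>xs. length xs = k \<longrightarrow> rec_eval (rs ! i) xs ((Gs ! i) xs))"
    using assms(2)
  proof (induction Gs)
    case (Cons G Gs)
    then obtain rs where "length rs = length Gs"
        "\<forall>i<length Gs. \<forall>xs. length xs = k \<longrightarrow> rec_eval (rs ! i) xs ((Gs ! i) xs)"
      by auto
    moreover obtain r where "\<forall>xs. length xs = k \<longrightarrow> rec_eval r xs (G xs)"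
      using Cons.prems unfolding recfn_def by auto
    ultimately show ?case
      by (intro exI[of _ "r # rs"]) (auto simp: nth_Cons split: nat.splits)
  qed simp
  then obtain rs where "length rs = length Gs"
      "\<forall>i<length Gs. \<forall>xs. length xs = k \<longrightarrow> rec_eval (rs ! i) xs ((Gs ! i) xs)"
    by blast
  then have "rec_eval (Comp f rs) xs (F (map (\<lambda>G. G xs) Gs))" if "length xs = k" for xs
    using f that by (intro rec_eval.comp[where ys = "map (\<lambda>G. G xs) Gs"]) auto
  then show ?thesis unfolding recfn_def by blast
qed

lemma recfn_prim:
  assumes "recfn k F" "recfn (Suc (Suc k)) G"
    and H0: "\<And>ys. H 0 ys = F ys" and HS: "\<And>n ys. H (Suc n) ys = G (n # H n ys # ys)"
  shows "recfn (Suc k) (\<lambda>xs. H (hd xs) (tl xs))"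
proof -
  obtain f where f: "\<forall>ys. length ys = k \<longrightarrow> rec_eval f ys (F ys)"
    using assms(1) unfolding recfn_def by auto
  obtain g where g: "\<forall>ys. length ys = Suc (Suc k) \<longrightarrow> rec_eval g ys (G ys)"
    using assms(2) unfolding recfn_def by auto
  have eval: "rec_eval (PrimRec f g) (n # ys) (H n ys)" if "length ys = k" for n ys
  proof (induction n)
    case 0
    show ?case unfolding H0 using f that by (auto intro: rec_eval.pr0)
  next
    case (Suc n)
    show ?case unfolding HS using g that by (auto intro: rec_eval.prS[OF Suc.IH])
  qed
  have "rec_eval (PrimRec f g) xs (H (hd xs) (tl xs))" if "length xs = Suc k" for xs
    using that eval by (cases xs) auto
  then show ?thesis unfolding recfn_def by blast
qed

lemma recfn_mu:
  assumes "recfn (Suc k) F" "\<And>xs. length xs = k \<Longrightarrow> \<exists>n. F (n # xs) = 0"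
  shows "recfn k (\<lambda>xs. LEAST n. F (n # xs) = 0)"
proof -
  obtain f where f: "\<forall>ys. length ys = Suc k \<longrightarrow> rec_eval f ys (F ys)"
    using assms(1) unfolding recfn_def by auto
  have "rec_eval (Mu f) xs (LEAST n. F (n # xs) = 0)" if len: "length xs = k" for xs
  proof (rule rec_eval.mu)
    have "F ((LEAST n. F (n # xs) = 0) # xs) = 0"
      by (rule LeastI_ex) (rule assms(2)[OF len])
    moreover have "rec_eval f ((LEAST n. F (n # xs) = 0) # xs) (F ((LEAST n. F (n # xs) = 0) # xs))"
      using f len by simp
    ultimately show "rec_eval f ((LEAST n. F (n # xs) = 0) # xs) 0"
      by simp
    show "\<forall>m<(LEAST n. F (n # xs) = 0). \<exists>v. 0 < v \<and> rec_eval f (m # xs) v"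
    proof (intro allI impI)
      fix m assume "m < (LEAST n. F (n # xs) = 0)"
      then have "F (m # xs) \<noteq> 0" by (rule not_less_Least)
      moreover have "rec_eval f (m # xs) (F (m # xs))" using f len by simp
      ultimately show "\<exists>v. 0 < v \<and> rec_eval f (m # xs) v" by blast
    qed
  qed
  then show ?thesis unfolding recfn_def by blast
qed

lemma recfn_comp1:
  "recfn 1 (\<lambda>xs. h (xs ! 0)) \<Longrightarrow> recfn k F \<Longrightarrow> recfn k (\<lambda>xs. h (F xs))"
  using recfn_comp[of "[F]" "\<lambda>xs. h (xs ! 0)" k] by simp

lemma recfn_comp2:
  "recfn 2 (\<lambda>xs. h (xs ! 0) (xs ! 1)) \<Longrightarrow> recfn k F \<Longrightarrow> recfn k G \<Longrightarrow>
   recfn k (\<lambda>xs. h (F xs) (G xs))"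
  using recfn_comp[of "[F, G]" "\<lambda>xs. h (xs ! 0) (xs ! 1)" k] by (simp add: numeral_2_eq_2)

lemma recfn_comp3:
  "recfn 3 (\<lambda>xs. h (xs ! 0) (xs ! 1) (xs ! 2)) \<Longrightarrow> recfn k F \<Longrightarrow> recfn k G \<Longrightarrow> recfn k K \<Longrightarrow>
   recfn k (\<lambda>xs. h (F xs) (G xs) (K xs))"
  using recfn_comp[of "[F, G, K]" "\<lambda>xs. h (xs ! 0) (xs ! 1) (xs ! 2)" k]
  by (simp add: numeral_3_eq_3)

lemma recfn_Suc: "recfn k F \<Longrightarrow> recfn k (\<lambda>xs. Suc (F xs))"
  using recfn_comp1[OF recfn_succ] .

lemma recfn_const: "recfn k (\<lambda>_. c)"
  by (induction c) (auto intro: recfn_zero recfn_Suc)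

lemma recfn_add: "recfn k F \<Longrightarrow> recfn k G \<Longrightarrow> recfn k (\<lambda>xs. F xs + G xs)"
proof -
  have "recfn (Suc 1) (\<lambda>xs. (\<lambda>n ys. n + ys ! 0) (hd xs) (tl xs))"
    by (rule recfn_prim[where G = "\<lambda>zs. Suc (zs ! 1)"]) (auto intro: recfn_proj recfn_Suc)
  then have "recfn 2 (\<lambda>xs. xs ! 0 + xs ! 1)"
    by (rule recfn_cong) (auto simp: numeral_2_eq_2 length_Suc_conv)
  then show "recfn k F \<Longrightarrow> recfn k G \<Longrightarrow> recfn k (\<lambda>xs. F xs + G xs)"
    by (rule recfn_comp2)
qed

lemma recfn_mult: "recfn k F \<Longrightarrow> recfn k G \<Longrightarrow> recfn k (\<lambda>xs. F xs * G xs)"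
proof -
  have "recfn (Suc 1) (\<lambda>xs. (\<lambda>n ys. n * ys ! 0) (hd xs) (tl xs))"
    by (rule recfn_prim[where G = "\<lambda>zs. zs ! 1 + zs ! 2"])
      (auto intro!: recfn_proj recfn_add recfn_zero)
  then have "recfn 2 (\<lambda>xs. xs ! 0 * xs ! 1)"
    by (rule recfn_cong) (auto simp: numeral_2_eq_2 length_Suc_conv)
  then show "recfn k F \<Longrightarrow> recfn k G \<Longrightarrow> recfn k (\<lambda>xs. F xs * G xs)"
    by (rule recfn_comp2)
qed

lemma recfn_pred: "recfn k F \<Longrightarrow> recfn k (\<lambda>xs. F xs - 1)"
proof -
  have "recfn (Suc 0) (\<lambda>xs. (\<lambda>n (ys :: nat list). n - 1) (hd xs) (tl xs))"
    by (rule recfn_prim[where G = "\<lambda>zs. zs ! 0"]) (auto intro!: recfn_proj recfn_zero)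
  then have "recfn 1 (\<lambda>xs. xs ! 0 - 1)"
    by (rule recfn_cong) (auto simp: numeral_2_eq_2 length_Suc_conv)
  then show "recfn k F \<Longrightarrow> recfn k (\<lambda>xs. F xs - 1)"
    by (rule recfn_comp1)
qed

lemma recfn_minus: "recfn k F \<Longrightarrow> recfn k G \<Longrightarrow> recfn k (\<lambda>xs. F xs - G xs)"
proof -
  have "recfn (Suc 1) (\<lambda>xs. (\<lambda>n ys. ys ! 0 - n) (hd xs) (tl xs))"
    by (rule recfn_prim[where G = "\<lambda>zs. zs ! 1 - 1"], rule recfn_proj, simp,
        intro recfn_pred recfn_proj, simp_all)
  then have "recfn 2 (\<lambda>xs. xs ! 1 - xs ! 0)"
    by (rule recfn_cong) (auto simp: numeral_2_eq_2 length_Suc_conv)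
  then show "recfn k F \<Longrightarrow> recfn k G \<Longrightarrow> recfn k (\<lambda>xs. F xs - G xs)"
    using recfn_comp2[of "\<lambda>a b. b - a" k G F] by simp
qed

lemma recfn_power: "recfn k F \<Longrightarrow> recfn k (\<lambda>xs. c ^ F xs)"
proof -
  have "recfn (Suc 0) (\<lambda>xs. (\<lambda>n (ys :: nat list). c ^ n) (hd xs) (tl xs))"
    by (rule recfn_prim[where G = "\<lambda>zs. c * zs ! 1"]) (auto intro!: recfn_proj recfn_mult recfn_const)
  then have "recfn 1 (\<lambda>xs. c ^ (xs ! 0))"
    by (rule recfn_cong) (auto simp: numeral_2_eq_2 length_Suc_conv)
  then show "recfn k F \<Longrightarrow> recfn k (\<lambda>xs. c ^ F xs)"
    by (rule recfn_comp1)
qed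

lemma recfn_triangle: "recfn k F \<Longrightarrow> recfn k (\<lambda>xs. triangle (F xs))"
proof -
  have "recfn (Suc 0) (\<lambda>xs. (\<lambda>n (ys :: nat list). triangle n) (hd xs) (tl xs))"
    by (rule recfn_prim[where G = "\<lambda>zs. Suc (zs ! 1 + zs ! 0)"])
      (auto intro!: recfn_proj recfn_add recfn_Suc recfn_zero)
  then have "recfn 1 (\<lambda>xs. triangle (xs ! 0))"
    by (rule recfn_cong) (auto simp: numeral_2_eq_2 length_Suc_conv)
  then show "recfn k F \<Longrightarrow> recfn k (\<lambda>xs. triangle (F xs))"
    by (rule recfn_comp1)
qed

lemma recfn_if_zero:
  "recfn k C \<Longrightarrow> recfn k F \<Longrightarrow> recfn k G \<Longrightarrow> recfn k (\<lambda>xs. if C xs = 0 then F xs else G xs)"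
proof -
  have "recfn (Suc 2) (\<lambda>xs. (\<lambda>n (ys :: nat list). if n = 0 then ys ! 0 else ys ! 1) (hd xs) (tl xs))"
    by (rule recfn_prim[where G = "\<lambda>zs. zs ! 3"]) (auto intro!: recfn_proj)
  then have "recfn 3 (\<lambda>xs. if xs ! 0 = 0 then xs ! 1 else xs ! 2)"
    by (rule recfn_cong) (auto simp: numeral_3_eq_3 length_Suc_conv)
  then show "recfn k C \<Longrightarrow> recfn k F \<Longrightarrow> recfn k G \<Longrightarrow> recfn k (\<lambda>xs. if C xs = 0 then F xs else G xs)"
    by (rule recfn_comp3)
qed

lemma recfn_div_const:
  assumes "0 < d" shows "recfn k F \<Longrightarrow> recfn k (\<lambda>xs. F xs div d)"
proof -
  have below_next_multiple: "x < d * Suc x" for x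
    using assms by (metis Suc_le_eq le_add1 less_le_trans mult_Suc_right mult_le_mono1 mult_1)
  have "recfn 1 (\<lambda>xs. LEAST n. (\<lambda>zs. 1 - (d * Suc (zs ! 0) - zs ! 1)) (n # xs) = 0)"
  proof (rule recfn_mu)
    show "recfn (Suc 1) (\<lambda>zs. 1 - (d * Suc (zs ! 0) - zs ! 1))"
      by (intro recfn_minus recfn_const recfn_mult recfn_Suc recfn_proj) auto
    show "\<exists>n. 1 - (d * Suc ((n # xs) ! 0) - (n # xs) ! 1) = 0" for xs :: "nat list"
      using below_next_multiple[of "xs ! 0"] by (intro exI[of _ "xs ! 0"]) simp
  qed
  then have "recfn 1 (\<lambda>xs. xs ! 0 div d)"
  proof (rule recfn_cong)
    show "(LEAST n. (\<lambda>zs. 1 - (d * Suc (zs ! 0) - zs ! 1)) (n # xs) = 0) = xs ! 0 div d"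
      for xs :: "nat list"
      using dividend_less_times_div[OF assms, of "xs ! 0"]
        less_mult_imp_div_less[of "xs ! 0" "Suc _" d]
      by (intro Least_equality) (auto simp: mult.commute less_Suc_eq_le)
  qed simp
  then show "recfn k F \<Longrightarrow> recfn k (\<lambda>xs. F xs div d)"
    by (rule recfn_comp1)
qed

definition prod_diag :: "nat \<Rightarrow> nat" where
  "prod_diag m = (LEAST c. m < triangle (Suc c))"

lemma prod_diag_bounds: "triangle (prod_diag m) \<le> m \<and> m < triangle (Suc (prod_diag m))"
proof
  have "m < triangle (Suc m)" by (induction m) auto
  then show "m < triangle (Suc (prod_diag m))"
    unfolding prod_diag_def by (rule LeastI)
  show "triangle (prod_diag m) \<le> m"
  proof (cases "prod_diag m")
    case (Suc c)
    then have "\<not> m < triangle (Suc c)"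
      unfolding prod_diag_def by (metis lessI not_less_Least)
    then show ?thesis using Suc by simp
  qed simp
qed

lemma prod_decode_eq_diag:
  "prod_decode m = (m - triangle (prod_diag m), prod_diag m - (m - triangle (prod_diag m)))"
proof -
  have "prod_encode (m - triangle (prod_diag m), prod_diag m - (m - triangle (prod_diag m))) = m"
    using prod_diag_bounds[of m] by (simp add: prod_encode_def)
  then show ?thesis by (metis prod_encode_inverse)
qed

lemma recfn_prod_diag: "recfn k F \<Longrightarrow> recfn k (\<lambda>xs. prod_diag (F xs))"
proof -
  have "recfn 1 (\<lambda>xs. LEAST n. (\<lambda>zs. 1 - (triangle (Suc (zs ! 0)) - zs ! 1)) (n # xs) = 0)"
  proof (rule recfn_mu)
    show "recfn (Suc 1) (\<lambda>zs. 1 - (triangle (Suc (zs ! 0)) - zs ! 1))"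
      by (intro recfn_minus recfn_const recfn_triangle recfn_Suc recfn_proj) auto
    show "\<exists>n. 1 - (triangle (Suc ((n # xs) ! 0)) - (n # xs) ! 1) = 0" for xs :: "nat list"
      using prod_diag_bounds[of "xs ! 0"] by (intro exI[of _ "prod_diag (xs ! 0)"]) simp
  qed
  then have "recfn 1 (\<lambda>xs. prod_diag (xs ! 0))"
  proof (rule recfn_cong)
    have "1 - (triangle (Suc n) - x) = 0 \<longleftrightarrow> x < triangle (Suc n)" for n x :: nat
      by linarith
    then show "(LEAST n. (\<lambda>zs. 1 - (triangle (Suc (zs ! 0)) - zs ! 1)) (n # xs) = 0)
        = prod_diag (xs ! 0)" for xs :: "nat list"
      unfolding prod_diag_def by (simp only: nth_Cons_0 nth_Cons_Suc One_nat_def)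
  qed simp
  then show "recfn k F \<Longrightarrow> recfn k (\<lambda>xs. prod_diag (F xs))"
    by (rule recfn_comp1)
qed

lemma recfn_fst_prod_decode: "recfn k F \<Longrightarrow> recfn k (\<lambda>xs. fst (prod_decode (F xs)))"
  unfolding prod_decode_eq_diag fst_conv by (intro recfn_minus recfn_triangle recfn_prod_diag)

lemma recfn_snd_prod_decode: "recfn k F \<Longrightarrow> recfn k (\<lambda>xs. snd (prod_decode (F xs)))"
  unfolding prod_decode_eq_diag snd_conv by (intro recfn_minus recfn_triangle recfn_prod_diag)

lemma recfn_prod_encode: "recfn k F \<Longrightarrow> recfn k G \<Longrightarrow> recfn k (\<lambda>xs. prod_encode (F xs, G xs))"
  unfolding prod_encode_def by (simp, intro recfn_add recfn_triangle)

lemma recfn_if_even: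
  assumes "recfn k C" "recfn k F" "recfn k G"
  shows "recfn k (\<lambda>xs. if even (C xs) then F xs else G xs)"
proof -
  have parity: "even n \<longleftrightarrow> n - 2 * (n div 2) = 0" for n :: nat
    by (simp add: minus_mult_div_eq_mod even_iff_mod_2_eq_zero)
  have "recfn k (\<lambda>xs. if C xs - 2 * (C xs div 2) = 0 then F xs else G xs)"
    using assms by (intro recfn_if_zero recfn_minus recfn_mult recfn_const recfn_div_const) simp_all
  then show ?thesis unfolding parity .
qed

lemma nat_int_decode_affine:
  "nat (int_decode a * int m + int c) = (if even a then a div 2 * m + c else c - Suc (a div 2) * m)"
proof (cases "even a")
  case True
  then show ?thesis by (simp add: int_decode_def sum_decode_def flip: of_nat_mult of_nat_add)
next
  case False
  then have affine: "int_decode a * int m + int c = int c - int (Suc (a div 2) * m)"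
    by (simp add: int_decode_def sum_decode_def algebra_simps)
  show ?thesis
    unfolding affine using False by (simp add: nat_diff_distrib' del: of_nat_mult of_nat_Suc)
qed

section \<open>Upper expectations and rescaled approximations\<close>

lemma upper_exp_le_affine:
  fixes f g :: "bool \<Rightarrow> real"
  assumes "0 \<le> a" "a \<le> b" "b \<le> 1" "0 \<le> c" "\<And>x. f x \<le> c * g x + K"
  shows "upper_exp {a..b} f \<le> c * upper_exp {a..b} g + K"
  unfolding upper_exp_def[of _ f]
proof (rule cSUP_least)
  show "{a..b} \<noteq> {}" using assms(2) by simp
  fix p assume p: "p \<in> {a..b}"
  then have p01: "0 \<le> p" "0 \<le> 1 - p" using assms(1,3) by auto
  have "bdd_above ((\<lambda>p. p * g True + (1 - p) * g False) ` {a..b})"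
  proof (rule bdd_aboveI2)
    fix p assume "p \<in> {a..b}"
    then show "p * g True + (1 - p) * g False \<le> max (g True) (g False)"
      using assms(1,3) by (intro convex_bound_le) auto
  qed
  then have g_le: "p * g True + (1 - p) * g False \<le> upper_exp {a..b} g"
    unfolding upper_exp_def by (rule cSUP_upper[OF p])
  have "p * f True + (1 - p) * f False \<le> p * (c * g True + K) + (1 - p) * (c * g False + K)"
    using p01 assms(5) by (intro add_mono mult_left_mono) auto
  also have "\<dots> = c * (p * g True + (1 - p) * g False) + K"
    by (simp add: algebra_simps)
  also have "\<dots> \<le> c * upper_exp {a..b} g + K"
    using g_le assms(4) by (intro add_right_mono mult_left_mono)
  finally show "p * f True + (1 - p) * f False \<le> c * upper_exp {a..b} g + K" .
qed

definition overestimate :: "(bool list \<Rightarrow> 'a) \<Rightarrow> (bool list \<Rightarrow> 'a) \<Rightarrow> bool list \<Rightarrow> 'a :: field" where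
  "overestimate q e s = (if s = [] then 1 else (q s + 3 * e s) / 4)"

lemma of_rat_overestimate:
  "of_rat (overestimate q e s) = overestimate (\<lambda>s. of_rat (q s)) (\<lambda>s. of_rat (e s)) s"
  by (simp add: overestimate_def of_rat_add of_rat_mult of_rat_divide)

context
  fixes T q e :: "bool list \<Rightarrow> 'a :: linordered_field" and s :: "bool list"
  assumes approx: "\<bar>T s - q s\<bar> \<le> e s"
begin

lemma overestimate_le: "s \<noteq> [] \<Longrightarrow> overestimate q e s \<le> T s / 4 + e s"
  using approx by (simp add: overestimate_def abs_le_iff field_simps)

lemma overestimate_ge: "T [] = 1 \<Longrightarrow> e [] \<le> 3 / 2 \<Longrightarrow> T s / 4 + e s / 2 \<le> overestimate q e s"
  using approx by (auto simp: overestimate_def abs_le_iff field_simps)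

lemma overestimate_pos:
  assumes "0 \<le> T s" "0 < e s" "T [] = 1" "e [] \<le> 3 / 2"
  shows "0 < overestimate q e s"
proof -
  have "0 < T s / 4 + e s / 2"
    using assms(1,2) by (simp add: add_nonneg_pos)
  also have "\<dots> \<le> overestimate q e s"
    using overestimate_ge assms(3,4) .
  finally show ?thesis .
qed

lemma overestimate_dist:
  "T [] = 1 \<Longrightarrow> 3 / 4 \<le> e [] \<Longrightarrow> \<bar>4 * overestimate q e s - T s\<bar> \<le> 4 * e s"
  using approx by (auto simp: overestimate_def abs_le_iff field_simps)

end

lemma supermartingale_overestimate:
  assumes "forecasting_system \<phi>" "supermartingale \<phi> T" "T [] = 1"
    and approx: "\<And>s. \<bar>T s - q s\<bar> \<le> e s"
    and halving: "\<And>s x. e (s @ [x]) \<le> e s / 2"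
    and "e [] \<le> 3 / 2"
  shows "supermartingale \<phi> (overestimate q e)"
  unfolding supermartingale_def
proof
  fix s
  obtain a b where ab: "0 \<le> a" "a \<le> b" "b \<le> 1" "\<phi> s = {a..b}"
    using assms(1) unfolding forecasting_system_def by blast
  have "overestimate q e (s @ [x]) \<le> 1 / 4 * T (s @ [x]) + e s / 2" for x
    using overestimate_le[of T "s @ [x]" q e, OF approx] halving[of s x] by simp
  then have "upper_exp (\<phi> s) (\<lambda>x. overestimate q e (s @ [x]))
      \<le> 1 / 4 * upper_exp (\<phi> s) (\<lambda>x. T (s @ [x])) + e s / 2"
    unfolding ab(4) using ab(1-3) by (intro upper_exp_le_affine) auto
  also have "\<dots> \<le> T s / 4 + e s / 2"
    using assms(2) unfolding supermartingale_def by (auto intro: add_right_mono)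
  also have "\<dots> \<le> overestimate q e s"
    using overestimate_ge[of T s q e, OF approx] assms(3,6) .
  finally show "upper_exp (\<phi> s) (\<lambda>x. overestimate q e (s @ [x])) \<le> overestimate q e s" .
qed

lemma test_supermartingale_overestimate:
  assumes "forecasting_system \<phi>" "test_supermartingale \<phi> T"
    and approx: "\<And>s. \<bar>T s - q s\<bar> \<le> e s"
    and halving: "\<And>s x. e (s @ [x]) \<le> e s / 2"
    and "\<And>s. 0 < e s" "e [] \<le> 3 / 2"
  shows "test_supermartingale \<phi> (overestimate q e)"
proof -
  have T: "supermartingale \<phi> T" "\<And>s. 0 \<le> T s" "T [] = 1"
    using assms(2) unfolding test_supermartingale_def by auto
  have "0 < overestimate q e s" for s
    using overestimate_pos[of T s q e] approx T(2,3) assms(5,6) by simp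
  then show ?thesis
    using supermartingale_overestimate[OF assms(1) T(1,3) approx halving assms(6)]
    unfolding test_supermartingale_def by (simp add: less_imp_le overestimate_def)
qed

section \<open>Coding the rescaled approximation\<close>

lemma length_le_bs_code: "length s \<le> bs_code s"
  by (induction s) auto

lemma bs_code_snoc_gt: "bs_code s < bs_code (s @ [x])"
  by (induction s) auto

lemma half_power_bs_code_snoc:
  "(1 / 2 :: 'a :: linordered_field) ^ bs_code (s @ [x]) \<le> (1 / 2) ^ bs_code s / 2"
  using power_decreasing[of "Suc (bs_code s)" "bs_code (s @ [x])" "1 / 2 :: 'a"] bs_code_snoc_gt[of s x]
  by simp

text \<open>With q = x / (b + 1) and e = 2^-n the value (q + 3 e) / 4 is the fraction
  (x 2^n + 3 (b + 1)) / (4 (b + 1) 2^n), whose numerator is non-negative wherever the value is.\<close>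

definition overestimate_code :: "(nat \<Rightarrow> nat) \<Rightarrow> nat \<Rightarrow> nat" where
  "overestimate_code g n =
    (if n = 0 then prod_encode (2, 0)
     else let (a, b) = prod_decode (g (prod_encode (n, n)))
       in prod_encode (2 * nat (int_decode a * int (2 ^ n) + int (3 * Suc b)), 4 * Suc b * 2 ^ n - 1))"

lemma recursive_overestimate_code:
  assumes "recursive_nat g" shows "recursive_nat (overestimate_code g)"
proof -
  have g: "recfn 1 (\<lambda>xs. g (xs ! 0))" using assms by (simp add: recursive_nat_iff_recfn)
  show ?thesis
    unfolding recursive_nat_iff_recfn overestimate_code_def Let_def split_beta nat_int_decode_affine
    by (intro recfn_if_zero recfn_if_even recfn_prod_encode recfn_proj recfn_const recfn_add
        recfn_mult recfn_minus recfn_div_const recfn_fst_prod_decode recfn_snd_prod_decode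
        recfn_power recfn_Suc recfn_comp1[OF g]) simp_all
qed

lemma rat_decode_overestimate_code:
  fixes g :: "nat \<Rightarrow> nat"
  defines "q \<equiv> \<lambda>s. rat_decode (g (prod_encode (bs_code s, bs_code s)))"
    and "e \<equiv> \<lambda>s. (1 / 2) ^ bs_code s"
  assumes "0 \<le> overestimate q e s"
  shows "rat_decode (overestimate_code g (bs_code s)) = overestimate q e s"
proof (cases "s = []")
  case True
  then show ?thesis
    by (simp add: overestimate_def overestimate_code_def rat_decode_def int_decode_def sum_decode_def)
next
  case False
  define n where "n = bs_code s"
  have "0 < n" using False unfolding n_def by (cases s) auto
  obtain a b where ab: "prod_decode (g (prod_encode (n, n))) = (a, b)" by fastforce
  define N where "N = int_decode a * 2 ^ n + 3 * int (Suc b)"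
  have "overestimate q e s = (of_int (int_decode a) / of_nat (Suc b) + 3 * (1 / 2) ^ n) / 4"
    using False by (simp add: overestimate_def q_def e_def rat_decode_def ab flip: n_def)
  also have "\<dots> = of_int N / of_nat (4 * Suc b * 2 ^ n)"
    by (simp add: N_def field_simps)
  finally have closed_form: "overestimate q e s = of_int N / of_nat (4 * Suc b * 2 ^ n)" .
  then have "0 \<le> N"
    using assms(3) by (simp add: zero_le_divide_iff del: of_nat_mult)
  have "overestimate_code g n = prod_encode (2 * nat N, 4 * Suc b * 2 ^ n - 1)"
    using \<open>0 < n\<close> by (simp add: overestimate_code_def ab N_def)
  then show ?thesis
    using \<open>0 \<le> N\<close> unfolding closed_form n_def[symmetric]
    by (simp add: rat_decode_def int_decode_def sum_decode_def)
qed

lemma recursive_rat_process_overestimate: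
  fixes g :: "nat \<Rightarrow> nat"
  defines "q \<equiv> \<lambda>s. rat_decode (g (prod_encode (bs_code s, bs_code s)))"
    and "e \<equiv> \<lambda>s. (1 / 2) ^ bs_code s"
  assumes "recursive_nat g" "\<And>s. 0 \<le> overestimate q e s"
  shows "recursive_rat_process (overestimate q e)"
  unfolding recursive_rat_process_def
proof (intro exI conjI allI)
  show "recursive_nat (overestimate_code g)"
    by (rule recursive_overestimate_code[OF assms(3)])
  show "overestimate q e s = rat_decode (overestimate_code g (bs_code s))" for s
    using rat_decode_overestimate_code[of g s] assms(4)[of s] unfolding q_def e_def by simp
qed

theorem lemma4p5:
  fixes \<phi> :: "bool list \<Rightarrow> real set" and T :: "bool list \<Rightarrow> real"
  assumes "forecasting_system \<phi>"
    and "test_supermartingale \<phi> T"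
    and "computable_real_process T"
  shows "\<exists>R :: bool list \<Rightarrow> rat. recursive_rat_process R \<and> (\<forall>s. 0 < R s)
           \<and> test_supermartingale \<phi> (\<lambda>s. of_rat (R s))
           \<and> (\<forall>s. \<bar>4 * of_rat (R s) - T s\<bar> \<le> 4 * (1/2) ^ length s)"
proof -
  obtain g where g: "recursive_nat g"
    and approx: "\<And>s N. \<bar>T s - of_rat (rat_decode (g (prod_encode (bs_code s, N))))\<bar> \<le> (1/2) ^ N"
    using assms(3) unfolding computable_real_process_def by auto
  have T: "\<And>s. 0 \<le> T s" "T [] = 1"
    using assms(2) unfolding test_supermartingale_def by auto
  define q where "q = (\<lambda>s. rat_decode (g (prod_encode (bs_code s, bs_code s))))"
  define R where "R = overestimate q (\<lambda>s. (1 / 2) ^ bs_code s)"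
  have R_real: "of_rat (R s) = overestimate (\<lambda>s. of_rat (q s)) (\<lambda>s. (1 / 2) ^ bs_code s) s" for s
    by (simp add: R_def of_rat_overestimate of_rat_power of_rat_divide)
  have approx_q: "\<bar>T s - of_rat (q s)\<bar> \<le> (1 / 2) ^ bs_code s" for s
    unfolding q_def by (rule approx)
  have test: "test_supermartingale \<phi> (\<lambda>s. of_rat (R s))"
    unfolding R_real using assms(1,2) approx_q half_power_bs_code_snoc
    by (rule test_supermartingale_overestimate) simp_all
  have pos: "0 < R s" for s
    using overestimate_pos[of T s "\<lambda>s. of_rat (q s)" "\<lambda>s. (1 / 2) ^ bs_code s"] approx_q T
    by (simp flip: R_real)
  have dist: "\<bar>4 * of_rat (R s) - T s\<bar> \<le> 4 * (1/2) ^ length s" for s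
  proof -
    have "\<bar>4 * of_rat (R s) - T s\<bar> \<le> 4 * (1 / 2) ^ bs_code s"
      using overestimate_dist[of T s "\<lambda>s. of_rat (q s)" "\<lambda>s. (1 / 2) ^ bs_code s"] approx_q T(2)
      by (simp flip: R_real)
    also have "\<dots> \<le> 4 * (1 / 2) ^ length s"
      by (simp add: length_le_bs_code)
    finally show ?thesis .
  qed
  have "recursive_rat_process R"
    using recursive_rat_process_overestimate[OF g] pos unfolding R_def q_def by (simp add: less_imp_le)
  then show ?thesis using pos test dist by blast
qed

end
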